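(* Let $S$ be a finite set of discrete probability distributions. For $x\in(0,1]$ let $C_S(x)$ be the smallest $y\in[0,1]$ with $\textsc{Rem-Mass}^{\textsc{advanced}}_S(y)\ge x$. Then $$\int_0^1\log_2\frac{1}{C_S(x)}\,dx\le\int_0^1\frac{\textsc{Inv-Prof}_S(y)}{y\ln 2}\,dy+\frac{1+\log_2 e}{2}.$$
   Context: Distributions are finite vectors $p(1)\ge\dots\ge p(n)\ge0$ summing to $1$. For $y\in[0,1]$, $$\textsc{Rem-Mass}^{\textsc{advanced}}_S(y)=\max_{p\in S}\sum_{j=1}^n\begin{cases}y & y\le p(j)/2,\\ p(j)/2 & p(j)/2<y<p(j),\\ p(j) & p(j)\le y.\end{cases}$$ For a distribution $p$, $\textsc{Inv-Sketch}_p(y)=\sum_j p(j)[p(j)\le y]$, and $\textsc{Inv-Prof}_S(y)=\max_{p\in S}\textsc{Inv-Sketch}_p(y)$. *)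

theory Defs
  imports "HOL-Analysis.Analysis"
begin

definition is_distribution :: "real list \<Rightarrow> bool" where
  "is_distribution p \<longleftrightarrow> sorted_wrt (\<ge>) p \<and> (\<forall>a\<in>set p. 0 \<le> a) \<and> sum_list p = 1"

definition rem_term :: "real \<Rightarrow> real \<Rightarrow> real" where
  "rem_term y q = (if y \<le> q / 2 then y else if y < q then q / 2 else q)"

definition rem_mass_adv :: "real list set \<Rightarrow> real \<Rightarrow> real" where
  "rem_mass_adv S y = Max ((\<lambda>p. sum_list (map (rem_term y) p)) ` S)"

definition inv_sketch :: "real list \<Rightarrow> real \<Rightarrow> real" where
  "inv_sketch p y = sum_list (map (\<lambda>q. if q \<le> y then q else 0) p)"

definition inv_prof :: "real list set \<Rightarrow> real \<Rightarrow> real" where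
  "inv_prof S y = Max ((\<lambda>p. inv_sketch p y) ` S)"

definition C_S :: "real list set \<Rightarrow> real \<Rightarrow> real" where
  "C_S S x = (LEAST y. y \<in> {0..1} \<and> rem_mass_adv S y \<ge> x)"

end

theory Submission
  imports Defs
begin

(* Write R = Rem-Mass and I = Inv-Prof. Since log_2 (1 / C(x)) = int_{C(x)}^1 dt / (t ln 2) and
   C(x) <= t forces x <= R(t), Tonelli bounds the left-hand side by int_0^1 R(t) / (t ln 2) dt.
   In a single distribution an atom q contributes [q <= t] q / 2 + t q / max(2t, q) to Rem-Mass
   at t, and for 2t <= 1 we have q / max(2t, q) = q + int_{2t}^1 [q <= s] q / s^2 ds. Summing
   over the atoms, R(t) / t <= I(t) / (2t) + min(1, 1 / (2t)) + int_{2t}^1 I(s) / s^2 ds.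
   Integrating over t in (0,1] and swapping the order of integration in the last term gives
   int_0^1 I(t) / t dt + (1 + ln 2) / 2. *)

lemma Least_threshold:
  fixes f :: "real \<Rightarrow> real"
  assumes right_usc: "\<And>y. f y < x \<Longrightarrow> \<forall>\<^sub>F z in at_right y. f z < x"
    and "a \<le> b" "x \<le> f b"
  shows "(LEAST y. y \<in> {a..b} \<and> x \<le> f y) \<in> {a..b} \<and> x \<le> f (LEAST y. y \<in> {a..b} \<and> x \<le> f y)"
proof -
  define A where "A = {y \<in> {a..b}. x \<le> f y}"
  have "b \<in> A" "bdd_below A"
    using assms by (auto simp: A_def intro: bdd_belowI[of _ a])
  have Inf_le: "Inf A \<le> y" if "y \<in> A" for y
    using that \<open>bdd_below A\<close> by (rule cInf_lower)
  have Inf_mem: "Inf A \<in> {a..b}"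
    using Inf_le[OF \<open>b \<in> A\<close>] \<open>b \<in> A\<close> by (auto simp: A_def intro: cInf_greatest)
  have "Inf A \<in> A"
  proof (rule ccontr)
    assume "Inf A \<notin> A"
    then have "f (Inf A) < x"
      using Inf_mem by (auto simp: A_def)
    then obtain c where "Inf A < c" and below: "\<And>z. Inf A < z \<Longrightarrow> z < c \<Longrightarrow> f z < x"
      using right_usc unfolding eventually_at_right_field by blast
    then obtain y where "y \<in> A" "y < c"
      using cInf_less_iff[OF _ \<open>bdd_below A\<close>] \<open>b \<in> A\<close> by blast
    moreover have "Inf A < y"
      using Inf_le[OF \<open>y \<in> A\<close>] \<open>y \<in> A\<close> \<open>Inf A \<notin> A\<close> by (intro le_neq_trans) auto
    ultimately have "f y < x"
      using below by blast
    with \<open>y \<in> A\<close> show False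
      by (simp add: A_def)
  qed
  moreover have "(LEAST y. y \<in> {a..b} \<and> x \<le> f y) = Inf A"
    using \<open>Inf A \<in> A\<close> Inf_le by (intro Least_equality) (auto simp: A_def)
  ultimately show ?thesis
    by (simp add: A_def)
qed

lemma ennreal_add_halves: "(x::ennreal) / 2 + x / 2 = x"
proof -
  have "x / 2 + x / 2 = x * 2 / (1 * 2)"
    by (simp add: add_divide_distrib_ennreal[symmetric] mult_2_right)
  also have "\<dots> = x"
    by (subst divide_mult_eq) (simp_all add: divide_ennreal_def)
  finally show ?thesis .
qed

lemma nn_integral_divide_real:
  fixes f :: "'a \<Rightarrow> real"
  assumes [measurable]: "f \<in> borel_measurable M" "A \<in> sets M" and "0 < c"
  shows "(\<integral>\<^sup>+x\<in>A. ennreal (f x / c) \<partial>M) = (\<integral>\<^sup>+x\<in>A. ennreal (f x) \<partial>M) / ennreal c"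
proof -
  have "ennreal (f x / c) = ennreal (f x) / ennreal c" for x
    using \<open>0 < c\<close> divide_ennreal[of "f x" c]
    by (cases "0 \<le> f x") (auto simp: ennreal_neg divide_nonpos_pos)
  then show ?thesis
    by (simp add: nn_integral_divide[symmetric] ennreal_times_divide mult.commute)
qed

lemma nn_integral_inverse_Icc:
  assumes "0 < a" "a \<le> b"
  shows "(\<integral>\<^sup>+t\<in>{a..b}. ennreal (1 / t) \<partial>lborel) = ennreal (ln b - ln a)"
proof -
  have "((\<lambda>t. 1 / t) has_integral (ln b - ln a)) {a..b}"
  proof (rule fundamental_theorem_of_calculus)
    show "(ln has_vector_derivative 1 / t) (at t within {a..b})" if "t \<in> {a..b}" for t
      using that assms
      by (auto intro!: derivative_eq_intros simp: has_real_derivative_iff_has_vector_derivative[symmetric])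
  qed (use assms in auto)
  then have "(\<integral>\<^sup>+t. indicator {a..b} t * (1 / t) \<partial>lborel) = ennreal (ln b - ln a)"
    using assms by (intro nn_integral_has_integral_lebesgue) auto
  moreover have "(\<integral>\<^sup>+t\<in>{a..b}. ennreal (1 / t) \<partial>lborel) = (\<integral>\<^sup>+t. indicator {a..b} t * (1 / t) \<partial>lborel)"
    by (auto intro!: nn_integral_cong split: split_indicator)
  ultimately show ?thesis
    by simp
qed

lemma nn_integral_inverse_square_Icc:
  assumes "0 < a" "a \<le> b"
  shows "(\<integral>\<^sup>+t\<in>{a..b}. ennreal (1 / t\<^sup>2) \<partial>lborel) = ennreal (1 / a - 1 / b)"
proof -
  have "((\<lambda>t. 1 / t\<^sup>2) has_integral (- 1 / b - - 1 / a)) {a..b}"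
  proof (rule fundamental_theorem_of_calculus)
    show "((\<lambda>t. - 1 / t) has_vector_derivative 1 / t\<^sup>2) (at t within {a..b})" if "t \<in> {a..b}" for t
      using that assms
      by (auto intro!: derivative_eq_intros simp: power2_eq_square
          has_real_derivative_iff_has_vector_derivative[symmetric])
  qed (use assms in auto)
  then have "(\<integral>\<^sup>+t. indicator {a..b} t * (1 / t\<^sup>2) \<partial>lborel) = ennreal (1 / a - 1 / b)"
    using assms by (intro nn_integral_has_integral_lebesgue) auto
  moreover have "(\<integral>\<^sup>+t\<in>{a..b}. ennreal (1 / t\<^sup>2) \<partial>lborel) = (\<integral>\<^sup>+t. indicator {a..b} t * (1 / t\<^sup>2) \<partial>lborel)"
    by (auto intro!: nn_integral_cong split: split_indicator)
  ultimately show ?thesis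
    by simp
qed

lemma nn_integral_min_one_inverse:
  "(\<integral>\<^sup>+t\<in>{0<..1}. ennreal (min 1 (1 / (2 * t))) \<partial>lborel) = ennreal ((1 + ln 2) / 2)"
proof -
  have "ennreal (min 1 (1 / (2 * t))) * indicator {0<..1} t
      = indicator {0<..<1/2} t + ennreal (1 / t / 2) * indicator {1/2..1} t" for t :: real
    by (auto simp: indicator_def min_def field_simps)
  then have "(\<integral>\<^sup>+t\<in>{0<..1}. ennreal (min 1 (1 / (2 * t))) \<partial>lborel)
      = emeasure lborel {0<..<1/2::real} + (\<integral>\<^sup>+t\<in>{1/2..1}. ennreal (1 / t / 2) \<partial>lborel)"
    by (simp add: nn_integral_add)
  also have "\<dots> = ennreal (1 / 2) + ennreal (ln 2) / 2"
    using nn_integral_divide_real[of "\<lambda>t. 1 / t" lborel "{1/2..1}" 2] nn_integral_inverse_Icc[of "1/2" 1]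
    by (simp add: ln_div)
  also have "\<dots> = ennreal ((1 + ln 2) / 2)"
    using divide_ennreal[of "ln 2" 2] by (simp add: ennreal_plus[symmetric] add_divide_distrib)
  finally show ?thesis .
qed

lemma nn_integral_log_threshold_le:
  fixes f c :: "real \<Rightarrow> real"
  assumes "mono f" "1 < b"
    and threshold: "\<And>x. x \<in> {0<..1} \<Longrightarrow> c x \<in> {0<..1} \<and> x \<le> f (c x)"
  shows "(\<integral>\<^sup>+x\<in>{0<..1}. ennreal (log b (1 / c x)) \<partial>lborel)
    \<le> (\<integral>\<^sup>+t\<in>{0<..1}. ennreal (f t / (t * ln b)) \<partial>lborel)"
proof -
  have [measurable]: "f \<in> borel_measurable borel"
    using \<open>mono f\<close> by (rule borel_measurable_mono)
  \<comment> \<open>In t, K x dominates the integrand of log b (1 / c x) = int_{c x}^1 dt / (t ln b);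
    in x, K integrates to f t / (t ln b).\<close>
  define K where "K x t = (if 0 < t \<and> t \<le> 1 \<and> 0 < x \<and> x \<le> f t then ennreal (1 / (t * ln b)) else 0)" for x t
  have "(\<lambda>(x, t). K x t) \<in> borel_measurable (lborel \<Otimes>\<^sub>M lborel)"
    unfolding K_def by measurable
  then have Fubini: "(\<integral>\<^sup>+x. \<integral>\<^sup>+t. K x t \<partial>lborel \<partial>lborel) = (\<integral>\<^sup>+t. \<integral>\<^sup>+x. K x t \<partial>lborel \<partial>lborel)"
    by (rule lborel_pair.Fubini'[symmetric])
  have "ennreal (log b (1 / c x)) * indicator {0<..1} x \<le> (\<integral>\<^sup>+t. K x t \<partial>lborel)" for x
  proof (cases "x \<in> {0<..1}")
    case True
    then have c: "0 < c x" "c x \<le> 1" "x \<le> f (c x)"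
      using threshold by auto
    have "ennreal (log b (1 / c x)) = ennreal (ln 1 - ln (c x)) / ennreal (ln b)"
      using c \<open>1 < b\<close> divide_ennreal[of "- ln (c x)" "ln b"] by (simp add: log_def ln_div)
    also have "\<dots> = (\<integral>\<^sup>+t\<in>{c x..1}. ennreal (1 / t / ln b) \<partial>lborel)"
      using c \<open>1 < b\<close> nn_integral_divide_real[of "\<lambda>t. 1 / t" lborel "{c x..1}" "ln b"]
      by (simp add: nn_integral_inverse_Icc)
    also have "\<dots> \<le> (\<integral>\<^sup>+t. K x t \<partial>lborel)"
    proof (rule nn_integral_mono)
      fix t
      have "x \<le> f t" if "c x \<le> t"
        using c(3) \<open>mono f\<close> that by (meson monoD order_trans)
      then show "ennreal (1 / t / ln b) * indicator {c x..1} t \<le> K x t"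
        using c True by (auto simp: K_def split: split_indicator)
    qed
    finally show ?thesis
      using True by simp
  qed simp
  then have "(\<integral>\<^sup>+x\<in>{0<..1}. ennreal (log b (1 / c x)) \<partial>lborel) \<le> (\<integral>\<^sup>+t. \<integral>\<^sup>+x. K x t \<partial>lborel \<partial>lborel)"
    unfolding Fubini[symmetric] by (rule nn_integral_mono)
  also have "\<dots> = (\<integral>\<^sup>+t\<in>{0<..1}. ennreal (f t / (t * ln b)) \<partial>lborel)"
  proof (rule nn_integral_cong)
    fix t
    have "K x t = ennreal (1 / (t * ln b)) * indicator {0<..1} t * indicator {0<..f t} x" for x
      by (simp add: K_def split: split_indicator)
    then have "(\<integral>\<^sup>+x. K x t \<partial>lborel) = ennreal (1 / (t * ln b)) * indicator {0<..1} t * ennreal (f t)"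
      by (cases "0 \<le> f t") (simp_all add: nn_integral_cmult_indicator ennreal_neg)
    also have "\<dots> = ennreal (f t / (t * ln b)) * indicator {0<..1} t"
      using \<open>1 < b\<close> by (auto simp: ennreal_mult'[symmetric] split: split_indicator)
    finally show "(\<integral>\<^sup>+x. K x t \<partial>lborel) = ennreal (f t / (t * ln b)) * indicator {0<..1} t" .
  qed
  finally show ?thesis .
qed

lemma nn_integral_tail_swap:
  fixes g :: "real \<Rightarrow> real"
  assumes [measurable]: "g \<in> borel_measurable borel"
  shows "(\<integral>\<^sup>+t\<in>{0<..1}. (\<integral>\<^sup>+s\<in>{2 * t..1}. ennreal (g s / s\<^sup>2) \<partial>lborel) \<partial>lborel)
    = (\<integral>\<^sup>+s\<in>{0<..1}. ennreal (g s / s) \<partial>lborel) / 2"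
proof -
  define F where "F t s = (if 0 < t \<and> t \<le> 1 \<and> 2 * t \<le> s \<and> s \<le> 1 then ennreal (g s / s\<^sup>2) else 0)" for t s :: real
  have "(\<lambda>(t, s). F t s) \<in> borel_measurable (lborel \<Otimes>\<^sub>M lborel)"
    unfolding F_def by measurable
  then have Fubini: "(\<integral>\<^sup>+t. \<integral>\<^sup>+s. F t s \<partial>lborel \<partial>lborel) = (\<integral>\<^sup>+s. \<integral>\<^sup>+t. F t s \<partial>lborel \<partial>lborel)"
    by (rule lborel_pair.Fubini'[symmetric])
  have "(\<integral>\<^sup>+s\<in>{2 * t..1}. ennreal (g s / s\<^sup>2) \<partial>lborel) * indicator {0<..1} t = (\<integral>\<^sup>+s. F t s \<partial>lborel)" for t
    by (auto simp: F_def split: split_indicator intro!: nn_integral_cong)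
  then have "(\<integral>\<^sup>+t\<in>{0<..1}. (\<integral>\<^sup>+s\<in>{2 * t..1}. ennreal (g s / s\<^sup>2) \<partial>lborel) \<partial>lborel)
      = (\<integral>\<^sup>+s. \<integral>\<^sup>+t. F t s \<partial>lborel \<partial>lborel)"
    by (simp add: Fubini)
  also have "\<dots> = (\<integral>\<^sup>+s\<in>{0<..1}. ennreal (g s / s / 2) \<partial>lborel)"
  proof (rule nn_integral_cong)
    fix s
    have "F t s = ennreal (g s / s\<^sup>2) * indicator {0<..1} s * indicator {0<..s / 2} t" for t
      by (auto simp: F_def split: split_indicator)
    then have "(\<integral>\<^sup>+t. F t s \<partial>lborel) = ennreal (g s / s\<^sup>2) * indicator {0<..1} s * ennreal (s / 2)"
      by (simp add: nn_integral_cmult_indicator split: split_indicator)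
    also have "\<dots> = ennreal (g s / s / 2) * indicator {0<..1} s"
      by (auto simp: ennreal_mult''[symmetric] power2_eq_square split: split_indicator)
    finally show "(\<integral>\<^sup>+t. F t s \<partial>lborel) = ennreal (g s / s / 2) * indicator {0<..1} s" .
  qed
  also have "\<dots> = (\<integral>\<^sup>+s\<in>{0<..1}. ennreal (g s / s) \<partial>lborel) / 2"
    using nn_integral_divide_real[of "\<lambda>s. g s / s" lborel "{0<..1}" 2] by simp
  finally show ?thesis .
qed

lemma rem_term_mono: "0 \<le> q \<Longrightarrow> y \<le> y' \<Longrightarrow> rem_term y q \<le> rem_term y' q"
  by (simp add: rem_term_def)

lemma rem_term_0: "0 \<le> q \<Longrightarrow> rem_term 0 q = 0"
  by (simp add: rem_term_def)

lemma rem_term_1: "0 \<le> q \<Longrightarrow> q \<le> 1 \<Longrightarrow> rem_term 1 q = q"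
  by (simp add: rem_term_def)

lemma rem_term_split:
  "0 \<le> q \<Longrightarrow> 0 < t \<Longrightarrow> rem_term t q = (if q \<le> t then q else 0) / 2 + t * (q / max (2 * t) q)"
  by (auto simp: rem_term_def max_def field_simps)

lemma rem_term_tendsto_at_right:
  assumes "0 \<le> q"
  shows "((\<lambda>y. rem_term y q) \<longlongrightarrow> rem_term y0 q) (at_right y0)"
proof -
  have rem_term_eq: "rem_term y q = (if y < q then min y (q / 2) else q)" for y
    using assms by (auto simp: rem_term_def)
  show ?thesis
  proof (cases "y0 < q")
    case True
    have "\<forall>\<^sub>F y in at_right y0. min y (q / 2) = rem_term y q"
      using True unfolding eventually_at_right_field rem_term_eq by (intro exI[of _ q]) auto
    moreover have "((\<lambda>y. min y (q / 2)) \<longlongrightarrow> rem_term y0 q) (at_right y0)"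
      using True unfolding rem_term_eq by (auto intro!: tendsto_eq_intros)
    ultimately show ?thesis
      by (rule Lim_transform_eventually[rotated])
  next
    case False
    have "\<forall>\<^sub>F y in at_right y0. rem_term y0 q = rem_term y q"
      using eventually_at_right_less[of y0] by eventually_elim (use False in \<open>simp add: rem_term_eq\<close>)
    then show ?thesis
      by (rule Lim_transform_eventually[OF tendsto_const])
  qed
qed

lemma div_max_eq_nn_integral:
  assumes "0 < a" "a \<le> 1" "0 \<le> q" "q \<le> 1"
  shows "ennreal (q / max a q)
    = ennreal q + (\<integral>\<^sup>+s\<in>{a..1}. ennreal ((if q \<le> s then q else 0) / s\<^sup>2) \<partial>lborel)"
proof -
  define m where "m = max a q"
  have m: "0 < m" "m \<le> 1"
    using assms by (auto simp: m_def)
  have "ennreal ((if q \<le> s then q else 0) / s\<^sup>2) * indicator {a..1} s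
      = ennreal q * (ennreal (1 / s\<^sup>2) * indicator {m..1} s)" for s
    using assms by (auto simp: m_def ennreal_mult'[symmetric] split: split_indicator)
  then have "(\<integral>\<^sup>+s\<in>{a..1}. ennreal ((if q \<le> s then q else 0) / s\<^sup>2) \<partial>lborel)
      = ennreal q * ennreal (1 / m - 1)"
    using m by (simp add: nn_integral_cmult nn_integral_inverse_square_Icc)
  also have "ennreal q + \<dots> = ennreal (q + q * (1 / m - 1))"
    using m \<open>0 \<le> q\<close> by (simp add: ennreal_mult ennreal_plus)
  also have "q + q * (1 / m - 1) = q / m"
    using m by (simp add: field_simps)
  finally show ?thesis
    by (simp add: m_def)
qed

lemma is_distribution_atom: "is_distribution p \<Longrightarrow> q \<in> set p \<Longrightarrow> 0 \<le> q \<and> q \<le> 1"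
  unfolding is_distribution_def by (metis member_le_sum_list)

definition rem_mass :: "real list \<Rightarrow> real \<Rightarrow> real" where
  "rem_mass p y = (\<Sum>q\<leftarrow>p. rem_term y q)"

lemma rem_mass_mono: "\<forall>q\<in>set p. 0 \<le> q \<Longrightarrow> y \<le> y' \<Longrightarrow> rem_mass p y \<le> rem_mass p y'"
  unfolding rem_mass_def by (induction p) (auto intro!: add_mono rem_term_mono)

lemma rem_mass_0: "\<forall>q\<in>set p. 0 \<le> q \<Longrightarrow> rem_mass p 0 = 0"
  unfolding rem_mass_def by (induction p) (auto simp: rem_term_0)

lemma rem_mass_1: "\<forall>q\<in>set p. 0 \<le> q \<and> q \<le> 1 \<Longrightarrow> rem_mass p 1 = sum_list p"
  unfolding rem_mass_def by (induction p) (auto simp: rem_term_1)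

lemma rem_mass_tendsto_at_right:
  "\<forall>q\<in>set p. 0 \<le> q \<Longrightarrow> (rem_mass p \<longlongrightarrow> rem_mass p y0) (at_right y0)"
  unfolding rem_mass_def by (induction p) (auto intro!: tendsto_add rem_term_tendsto_at_right)

lemma rem_mass_split:
  assumes "\<forall>q\<in>set p. 0 \<le> q" "0 < t"
  shows "rem_mass p t = inv_sketch p t / 2 + t * (\<Sum>q\<leftarrow>p. q / max (2 * t) q)"
  using assms unfolding rem_mass_def inv_sketch_def
  by (induction p) (auto simp: rem_term_split add_divide_distrib distrib_left)

lemma inv_sketch_nonneg: "\<forall>q\<in>set p. 0 \<le> q \<Longrightarrow> 0 \<le> inv_sketch p y"
  unfolding inv_sketch_def by (induction p) (auto intro!: add_nonneg_nonneg)

lemma inv_sketch_mono: "\<forall>q\<in>set p. 0 \<le> q \<Longrightarrow> y \<le> y' \<Longrightarrow> inv_sketch p y \<le> inv_sketch p y'"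
  unfolding inv_sketch_def by (induction p) (auto intro!: add_mono)

lemma inv_sketch_measurable [measurable]: "inv_sketch p \<in> borel_measurable borel"
  by (induction p) (simp_all add: inv_sketch_def)

lemma sum_list_div_max_eq_nn_integral:
  assumes "0 < a" "a \<le> 1" "\<forall>q\<in>set p. 0 \<le> q \<and> q \<le> 1"
  shows "ennreal (\<Sum>q\<leftarrow>p. q / max a q)
    = ennreal (sum_list p) + (\<integral>\<^sup>+s\<in>{a..1}. ennreal (inv_sketch p s / s\<^sup>2) \<partial>lborel)"
  using assms(3)
proof (induction p)
  case Nil
  then show ?case
    by (simp add: inv_sketch_def)
next
  case (Cons q p)
  have q: "0 \<le> q" "q \<le> 1" and p: "\<forall>q\<in>set p. 0 \<le> q \<and> q \<le> 1"
    using Cons.prems by auto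
  have "ennreal (inv_sketch (q # p) s / s\<^sup>2) * indicator {a..1} s
      = ennreal ((if q \<le> s then q else 0) / s\<^sup>2) * indicator {a..1} s
        + ennreal (inv_sketch p s / s\<^sup>2) * indicator {a..1} s" for s
    using q inv_sketch_nonneg[of p s] p
    by (simp add: inv_sketch_def add_divide_distrib ennreal_plus distrib_right)
  then have "(\<integral>\<^sup>+s\<in>{a..1}. ennreal (inv_sketch (q # p) s / s\<^sup>2) \<partial>lborel)
      = (\<integral>\<^sup>+s\<in>{a..1}. ennreal ((if q \<le> s then q else 0) / s\<^sup>2) \<partial>lborel)
        + (\<integral>\<^sup>+s\<in>{a..1}. ennreal (inv_sketch p s / s\<^sup>2) \<partial>lborel)"
    by (simp add: nn_integral_add)
  moreover have "0 \<le> q / max a q" "0 \<le> (\<Sum>q\<leftarrow>p. q / max a q)" "0 \<le> sum_list p"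
    using q p \<open>0 < a\<close> by (auto intro!: sum_list_nonneg)
  ultimately show ?case
    using Cons.IH[OF p] div_max_eq_nn_integral[OF assms(1,2) q] q
    by (simp add: ennreal_plus add_ac)
qed

lemma rem_mass_div_le:
  assumes "is_distribution p" "0 < t"
  shows "ennreal (rem_mass p t / t) \<le> ennreal (inv_sketch p t / t / 2) + ennreal (min 1 (1 / (2 * t)))
    + (\<integral>\<^sup>+s\<in>{2 * t..1}. ennreal (inv_sketch p s / s\<^sup>2) \<partial>lborel)"
proof -
  have atoms: "\<forall>q\<in>set p. 0 \<le> q \<and> q \<le> 1" and "sum_list p = 1"
    using assms(1) is_distribution_atom by (auto simp: is_distribution_def)
  define W where "W = (\<Sum>q\<leftarrow>p. q / max (2 * t) q)"
  have W_le: "ennreal W \<le> ennreal (min 1 (1 / (2 * t)))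
      + (\<integral>\<^sup>+s\<in>{2 * t..1}. ennreal (inv_sketch p s / s\<^sup>2) \<partial>lborel)"
  proof (cases "2 * t \<le> 1")
    case True
    then show ?thesis
      using sum_list_div_max_eq_nn_integral[of "2 * t" p] atoms \<open>sum_list p = 1\<close> \<open>0 < t\<close>
      by (simp add: W_def min_def field_simps)
  next
    case False
    have "W \<le> (\<Sum>q\<leftarrow>p. q * (1 / (2 * t)))"
      unfolding W_def using atoms \<open>0 < t\<close> by (auto intro!: sum_list_mono divide_left_mono)
    also have "\<dots> = min 1 (1 / (2 * t))"
      using False \<open>sum_list p = 1\<close> sum_list_mult_const[of "\<lambda>q. q" "1 / (2 * t)" p] by simp
    finally have "ennreal W \<le> ennreal (min 1 (1 / (2 * t)))"
      by (rule ennreal_leI)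
    then show ?thesis
      by (rule add_increasing2[OF zero_le])
  qed
  have "rem_mass p t / t = inv_sketch p t / t / 2 + W"
    using rem_mass_split[of p t] atoms \<open>0 < t\<close> by (simp add: W_def field_simps)
  moreover have "0 \<le> inv_sketch p t" "0 \<le> W"
    using atoms \<open>0 < t\<close> inv_sketch_nonneg by (auto simp: W_def intro!: sum_list_nonneg)
  ultimately have "ennreal (rem_mass p t / t) = ennreal (inv_sketch p t / t / 2) + ennreal W"
    using \<open>0 < t\<close> by (simp add: ennreal_plus)
  with W_le show ?thesis
    by (simp add: add.assoc add_left_mono)
qed

locale distribution_family =
  fixes S :: "real list set"
  assumes finite_S: "finite S" and nonempty_S: "S \<noteq> {}"
    and distribution: "p \<in> S \<Longrightarrow> is_distribution p"
begin

lemma atoms_bounded: "p \<in> S \<Longrightarrow> \<forall>q\<in>set p. 0 \<le> q \<and> q \<le> 1"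
  using distribution is_distribution_atom by blast

lemma rem_mass_adv_eq_Max: "rem_mass_adv S y = Max ((\<lambda>p. rem_mass p y) ` S)"
  unfolding rem_mass_adv_def rem_mass_def ..

lemma rem_mass_le_rem_mass_adv: "p \<in> S \<Longrightarrow> rem_mass p y \<le> rem_mass_adv S y"
  unfolding rem_mass_adv_eq_Max using finite_S by (intro Max_ge) auto

lemma rem_mass_adv_mono: "mono (rem_mass_adv S)"
proof (rule monoI)
  fix y y' :: real
  assume "y \<le> y'"
  then have "\<forall>p\<in>S. rem_mass p y \<le> rem_mass_adv S y'"
    using atoms_bounded by (meson order_trans rem_mass_mono rem_mass_le_rem_mass_adv)
  then show "rem_mass_adv S y \<le> rem_mass_adv S y'"
    using finite_S nonempty_S by (simp add: rem_mass_adv_eq_Max[of y])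
qed

lemma rem_mass_adv_measurable [measurable]: "rem_mass_adv S \<in> borel_measurable borel"
  using rem_mass_adv_mono by (rule borel_measurable_mono)

lemma rem_mass_adv_less_eventually:
  assumes "rem_mass_adv S y < x"
  shows "\<forall>\<^sub>F z in at_right y. rem_mass_adv S z < x"
proof -
  have "\<forall>\<^sub>F z in at_right y. rem_mass p z < x" if "p \<in> S" for p
  proof (rule order_tendstoD(2)[OF rem_mass_tendsto_at_right])
    show "\<forall>q\<in>set p. 0 \<le> q"
      using atoms_bounded that by blast
    show "rem_mass p y < x"
      using rem_mass_le_rem_mass_adv[OF that] assms by (rule order.strict_trans1)
  qed
  then have "\<forall>\<^sub>F z in at_right y. \<forall>p\<in>S. rem_mass p z < x"
    using finite_S by (simp add: eventually_ball_finite)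
  then show ?thesis
    using finite_S nonempty_S by (simp add: rem_mass_adv_eq_Max)
qed

lemma C_S_mem:
  assumes "x \<in> {0<..1}"
  shows "C_S S x \<in> {0<..1} \<and> x \<le> rem_mass_adv S (C_S S x)"
proof -
  obtain p where "p \<in> S"
    using nonempty_S by blast
  then have "rem_mass p 1 = 1"
    using atoms_bounded distribution rem_mass_1 by (simp add: is_distribution_def)
  then have "x \<le> rem_mass_adv S 1"
    using assms rem_mass_le_rem_mass_adv[OF \<open>p \<in> S\<close>, of 1] by simp
  then have C: "C_S S x \<in> {0..1}" "x \<le> rem_mass_adv S (C_S S x)"
    using Least_threshold[OF rem_mass_adv_less_eventually] unfolding C_S_def by auto
  have "rem_mass_adv S 0 = 0"
    using finite_S nonempty_S atoms_bounded rem_mass_0 by (simp add: rem_mass_adv_eq_Max)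
  then have "C_S S x \<noteq> 0"
    using C assms by auto
  with C show ?thesis
    by auto
qed

lemma inv_sketch_le_inv_prof: "p \<in> S \<Longrightarrow> inv_sketch p y \<le> inv_prof S y"
  unfolding inv_prof_def using finite_S by (intro Max_ge) auto

lemma inv_prof_mono: "mono (inv_prof S)"
proof (rule monoI)
  fix y y' :: real
  assume "y \<le> y'"
  then have "\<forall>p\<in>S. inv_sketch p y \<le> inv_prof S y'"
    using atoms_bounded by (meson order_trans inv_sketch_mono inv_sketch_le_inv_prof)
  then show "inv_prof S y \<le> inv_prof S y'"
    using finite_S nonempty_S by (simp add: inv_prof_def[of S y])
qed

lemma inv_prof_measurable [measurable]: "inv_prof S \<in> borel_measurable borel"
  using inv_prof_mono by (rule borel_measurable_mono)

lemma rem_mass_adv_div_le: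
  assumes "0 < t"
  shows "ennreal (rem_mass_adv S t / t) \<le> ennreal (inv_prof S t / t / 2) + ennreal (min 1 (1 / (2 * t)))
    + (\<integral>\<^sup>+s\<in>{2 * t..1}. ennreal (inv_prof S s / s\<^sup>2) \<partial>lborel)"
proof -
  have "Max ((\<lambda>p. rem_mass p t) ` S) \<in> (\<lambda>p. rem_mass p t) ` S"
    using finite_S nonempty_S by (intro Max_in) auto
  then obtain p where "p \<in> S" "rem_mass_adv S t = rem_mass p t"
    unfolding rem_mass_adv_eq_Max by auto
  then have "ennreal (rem_mass_adv S t / t) \<le> ennreal (inv_sketch p t / t / 2) + ennreal (min 1 (1 / (2 * t)))
      + (\<integral>\<^sup>+s\<in>{2 * t..1}. ennreal (inv_sketch p s / s\<^sup>2) \<partial>lborel)"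
    using rem_mass_div_le distribution assms by simp
  also have "\<dots> \<le> ennreal (inv_prof S t / t / 2) + ennreal (min 1 (1 / (2 * t)))
      + (\<integral>\<^sup>+s\<in>{2 * t..1}. ennreal (inv_prof S s / s\<^sup>2) \<partial>lborel)"
    using \<open>p \<in> S\<close> assms
    by (intro add_mono order.refl ennreal_leI divide_right_mono nn_integral_mono mult_right_mono
        inv_sketch_le_inv_prof) auto
  finally show ?thesis .
qed

lemma nn_integral_rem_mass_adv_le:
  "(\<integral>\<^sup>+t\<in>{0<..1}. ennreal (rem_mass_adv S t / t) \<partial>lborel)
    \<le> (\<integral>\<^sup>+t\<in>{0<..1}. ennreal (inv_prof S t / t) \<partial>lborel) + ennreal ((1 + ln 2) / 2)"
proof -
  let ?X = "\<integral>\<^sup>+t\<in>{0<..1}. ennreal (inv_prof S t / t) \<partial>lborel"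
  define tail where "tail t = (\<integral>\<^sup>+s\<in>{2 * t..1}. ennreal (inv_prof S s / s\<^sup>2) \<partial>lborel)" for t :: real
  have "tail = (\<lambda>t. \<integral>\<^sup>+s. (if 2 * t \<le> s \<and> s \<le> 1 then ennreal (inv_prof S s / s\<^sup>2) else 0) \<partial>lborel)"
    unfolding tail_def by (intro ext nn_integral_cong) (simp split: split_indicator)
  then have [measurable]: "tail \<in> borel_measurable lborel"
    by simp
  have "(\<integral>\<^sup>+t\<in>{0<..1}. ennreal (rem_mass_adv S t / t) \<partial>lborel)
      \<le> (\<integral>\<^sup>+t\<in>{0<..1}. ennreal (inv_prof S t / t / 2) + ennreal (min 1 (1 / (2 * t))) + tail t \<partial>lborel)"
  proof (rule nn_integral_mono)
    fix t :: real
    show "ennreal (rem_mass_adv S t / t) * indicator {0<..1} t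
        \<le> (ennreal (inv_prof S t / t / 2) + ennreal (min 1 (1 / (2 * t))) + tail t) * indicator {0<..1} t"
    proof (cases "t \<in> {0<..1}")
      case True
      then show ?thesis
        unfolding tail_def by (intro mult_right_mono rem_mass_adv_div_le) auto
    qed simp
  qed
  also have "\<dots> = (\<integral>\<^sup>+t\<in>{0<..1}. ennreal (inv_prof S t / t / 2) \<partial>lborel)
      + (\<integral>\<^sup>+t\<in>{0<..1}. ennreal (min 1 (1 / (2 * t))) \<partial>lborel) + (\<integral>\<^sup>+t\<in>{0<..1}. tail t \<partial>lborel)"
    by (simp add: distrib_right nn_integral_add)
  also have "(\<integral>\<^sup>+t\<in>{0<..1}. ennreal (inv_prof S t / t / 2) \<partial>lborel) = ?X / 2"
    using nn_integral_divide_real[of "\<lambda>t. inv_prof S t / t" lborel "{0<..1}" 2] by simp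
  also have "(\<integral>\<^sup>+t\<in>{0<..1}. tail t \<partial>lborel) = ?X / 2"
    unfolding tail_def by (rule nn_integral_tail_swap) simp
  also note nn_integral_min_one_inverse
  also have "?X / 2 + ennreal ((1 + ln 2) / 2) + ?X / 2 = (?X / 2 + ?X / 2) + ennreal ((1 + ln 2) / 2)"
    by (simp only: add_ac)
  also have "?X / 2 + ?X / 2 = ?X"
    by (rule ennreal_add_halves)
  finally show ?thesis .
qed

end

theorem lemma7:
  fixes S :: "real list set"
  assumes "finite S" and "S \<noteq> {}" and "\<forall>p\<in>S. is_distribution p"
  shows "(\<integral>\<^sup>+ x\<in>{0<..1}. ennreal (log 2 (1 / C_S S x)) \<partial>lborel)
    \<le> (\<integral>\<^sup>+ y\<in>{0<..1}. ennreal (inv_prof S y / (y * ln 2)) \<partial>lborel)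
       + ennreal ((1 + log 2 (exp 1)) / 2)"
proof -
  interpret distribution_family S
    using assms by unfold_locales auto
  have "(\<integral>\<^sup>+ x\<in>{0<..1}. ennreal (log 2 (1 / C_S S x)) \<partial>lborel)
      \<le> (\<integral>\<^sup>+t\<in>{0<..1}. ennreal (rem_mass_adv S t / (t * ln 2)) \<partial>lborel)"
    using rem_mass_adv_mono C_S_mem by (intro nn_integral_log_threshold_le) auto
  also have "\<dots> = (\<integral>\<^sup>+t\<in>{0<..1}. ennreal (rem_mass_adv S t / t) \<partial>lborel) / ennreal (ln 2)"
    using nn_integral_divide_real[of "\<lambda>t. rem_mass_adv S t / t" lborel "{0<..1}" "ln 2"] by simp
  also have "\<dots> \<le> ((\<integral>\<^sup>+t\<in>{0<..1}. ennreal (inv_prof S t / t) \<partial>lborel) + ennreal ((1 + ln 2) / 2))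
      / ennreal (ln 2)"
    by (intro divide_right_mono_ennreal nn_integral_rem_mass_adv_le)
  also have "\<dots> = (\<integral>\<^sup>+ y\<in>{0<..1}. ennreal (inv_prof S y / (y * ln 2)) \<partial>lborel)
       + ennreal ((1 + log 2 (exp 1)) / 2)"
    using nn_integral_divide_real[of "\<lambda>t. inv_prof S t / t" lborel "{0<..1}" "ln 2"]
      divide_ennreal[of "(1 + ln 2) / 2" "ln 2"]
    by (simp add: add_divide_distrib_ennreal log_def field_simps)
  finally show ?thesis .
qed

end
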